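(* Let $\epsilon\in(0,1/2)$ and let $(m_i)_{i\ge1}$, $(r_i)_{i\ge1}$ be sequences of positive integers with $r_i\le m_i$ for all $i$, $\lim_{i\to\infty}m_i=\infty$ and $\limsup_{i\to\infty}\binom{m_i}{\le r_i}2^{-m_i}<1-H(\epsilon)$. Then there exists $c>0$ such that $P_e(m_i,r_i,\epsilon)<1/2-c$ for all sufficiently large $i$.
   Context: $H$ is the binary entropy function and $\binom{m}{\le r}=\sum_{j=0}^r\binom mj$. $RM(m,r)$ is the set of evaluation vectors $(f(x))_{x\in\mathbb{F}_2^m}$ of polynomials $f\in\mathbb{F}_2[X_1,\dots,X_m]$ of degree at most $r$. Draw $f$ uniformly from $RM(m,r)$, draw $Z\in\{0,1\}^{\mathbb{F}_2^m}$ with i.i.d. Bernoulli$(\epsilon)$ entries independent of $f$, and set $\tilde f=f+Z$ over $\mathbb{F}_2$. Let $L_{m,r,\epsilon}(\tilde f)$ be the most likely value of $f(0^m)$ given the values $\tilde f(x)$ for all $x\ne0^m$ (a uniformly random bit if both values are equally likely), and $P_e(m,r,\epsilon)=\mathbb{P}(L_{m,r,\epsilon}(\tilde f)\ne f(0^m))$. *)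

theory Defs
  imports "HOL-Analysis.Analysis"
begin

definition bin_entropy :: "real \<Rightarrow> real" where
  "bin_entropy p = - p * log 2 p - (1 - p) * log 2 (1 - p)"

definition binom_le :: "nat \<Rightarrow> nat \<Rightarrow> nat" where
  "binom_le m r = (\<Sum>j\<le>r. m choose j)"

text \<open>Points of F_2^m: a point x = (x_1,...,x_m) is represented by its support,
  a subset of {0..<m} (coordinate X_(i+1) corresponds to index i). The zero point is {}.\<close>
definition pts :: "nat \<Rightarrow> nat set set" where
  "pts m = Pow {..<m}"

definition words :: "nat \<Rightarrow> (nat set \<Rightarrow> bool) set" where
  "words m = {w. \<forall>x. x \<notin> pts m \<longrightarrow> \<not> w x}"

definition mono_exps :: "nat \<Rightarrow> nat \<Rightarrow> (nat \<Rightarrow> nat) set" where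
  "mono_exps m r = {e. (\<forall>i. m \<le> i \<longrightarrow> e i = 0) \<and> (\<Sum>i<m. e i) \<le> r}"

definition mono_eval :: "(nat \<Rightarrow> nat) \<Rightarrow> nat set \<Rightarrow> bool" where
  "mono_eval e x = (\<forall>i. 0 < e i \<longrightarrow> i \<in> x)"

text \<open>Evaluation vector of the polynomial with F_2-coefficients a (a e = coefficient
  of the monomial with exponent vector e) over the monomials of degree \<le> r.\<close>
definition poly_evalvec :: "nat \<Rightarrow> nat \<Rightarrow> ((nat \<Rightarrow> nat) \<Rightarrow> bool) \<Rightarrow> nat set \<Rightarrow> bool" where
  "poly_evalvec m r a = (\<lambda>x. x \<in> pts m \<and> odd (card {e \<in> mono_exps m r. a e \<and> mono_eval e x}))"

definition RM :: "nat \<Rightarrow> nat \<Rightarrow> (nat set \<Rightarrow> bool) set" where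
  "RM m r = range (poly_evalvec m r)"

definition noise_prob :: "nat \<Rightarrow> real \<Rightarrow> (nat set \<Rightarrow> bool) \<Rightarrow> real" where
  "noise_prob m eps Z = (\<Prod>x\<in>pts m. if Z x then eps else 1 - eps)"

text \<open>Likelihood (up to the common factor 1/|RM(m,r)|) of f(0)=b given the
  received values y x at all nonzero points x.\<close>
definition lik :: "nat \<Rightarrow> nat \<Rightarrow> real \<Rightarrow> (nat set \<Rightarrow> bool) \<Rightarrow> bool \<Rightarrow> real" where
  "lik m r eps y b = (\<Sum>g\<in>{g \<in> RM m r. g {} = b}.
      \<Prod>x\<in>pts m - {{}}. if g x = y x then 1 - eps else eps)"

text \<open>Error probability of the MAP decoder L for the transmitted f and noise Z:
  1 if the wrong value is strictly more likely, 1/2 on a tie (random bit), 0 otherwise.\<close>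
definition dec_err :: "nat \<Rightarrow> nat \<Rightarrow> real \<Rightarrow> (nat set \<Rightarrow> bool) \<Rightarrow> (nat set \<Rightarrow> bool) \<Rightarrow> real" where
  "dec_err m r eps f Z =
     (let y = (\<lambda>x. f x \<noteq> Z x);
          lr = lik m r eps y (f {}); lw = lik m r eps y (\<not> f {})
      in if lw > lr then 1 else if lw = lr then 1/2 else 0)"

definition P_e :: "nat \<Rightarrow> nat \<Rightarrow> real \<Rightarrow> real" where
  "P_e m r eps = (\<Sum>f\<in>RM m r. \<Sum>Z\<in>words m.
      (1 / real (card (RM m r))) * noise_prob m eps Z * dec_err m r eps f Z)"

end

theory Submission
  imports Defs
begin

text \<open>Let \<open>Y = f + Z\<close> be the received word. Han's inequality bounds the sum over all points
  \<open>a\<close> of the conditional entropies \<open>H(Y\<^sub>a | Y\<^bsub>-a\<^esub>)\<close> by \<open>H(Y) \<le> log |RM(m,r)| + 2\<^sup>m H(\<epsilon>)\<close>.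
  Since \<open>RM(m,r)\<close> is invariant under the translations of \<open>\<bbbF>\<^sub>2\<^sup>m\<close>, all these conditional
  entropies equal \<open>H(Y\<^sub>0 | Y\<^bsub>-0\<^esub>)\<close>, which is at least \<open>2 P\<^sub>e\<close> because the binary entropy
  satisfies \<open>h(t) \<ge> 2 min(t, 1 - t)\<close>. Hence \<open>P\<^sub>e(m,r,\<epsilon>) \<le> (binom_le m r / 2\<^sup>m + H(\<epsilon>)) / 2\<close>
  for all \<open>m\<close> and \<open>r\<close>.\<close>

section \<open>Entropy of marginals\<close>

definition agrees_on :: "'i set \<Rightarrow> ('i \<Rightarrow> 'v) \<Rightarrow> ('i \<Rightarrow> 'v) \<Rightarrow> bool" where
  "agrees_on A y z \<longleftrightarrow> (\<forall>x\<in>A. y x = z x)"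

definition marginal :: "('i \<Rightarrow> 'v) set \<Rightarrow> (('i \<Rightarrow> 'v) \<Rightarrow> real) \<Rightarrow> 'i set \<Rightarrow> ('i \<Rightarrow> 'v) \<Rightarrow> real" where
  "marginal S p A y = (\<Sum>z\<in>{z\<in>S. agrees_on A z y}. p z)"

definition marginal_entropy :: "('i \<Rightarrow> 'v) set \<Rightarrow> (('i \<Rightarrow> 'v) \<Rightarrow> real) \<Rightarrow> 'i set \<Rightarrow> real" where
  "marginal_entropy S p A = - (\<Sum>y\<in>S. p y * ln (marginal S p A y))"

lemma agrees_on_sym: "agrees_on A y z \<longleftrightarrow> agrees_on A z y"
  unfolding agrees_on_def by auto

lemma agrees_on_trans: "agrees_on A x y \<Longrightarrow> agrees_on A y z \<Longrightarrow> agrees_on A x z"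
  unfolding agrees_on_def by auto

lemma agrees_on_Un: "agrees_on (A \<union> B) x y \<longleftrightarrow> agrees_on A x y \<and> agrees_on B x y"
  unfolding agrees_on_def by auto

lemma marginal_cong: "agrees_on A y y' \<Longrightarrow> marginal S p A y = marginal S p A y'"
  unfolding marginal_def by (rule sum.cong) (auto intro: agrees_on_trans simp: agrees_on_sym)

lemma marginal_eq_sum_if:
  "finite S \<Longrightarrow> marginal S p A y = (\<Sum>z\<in>S. if agrees_on A z y then p z else 0)"
  unfolding marginal_def by (simp add: sum.inter_filter)

lemma marginal_empty: "marginal S p {} y = sum p S"
  unfolding marginal_def agrees_on_def by simp

lemma marginal_entropy_bij_invariant:
  assumes finite_S: "finite S" and bij: "bij_betw \<sigma> S S" and p_\<sigma>: "\<And>y. y \<in> S \<Longrightarrow> p (\<sigma> y) = p y"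
    and agrees_\<sigma>: "\<And>y z. y \<in> S \<Longrightarrow> z \<in> S \<Longrightarrow> agrees_on B (\<sigma> z) (\<sigma> y) \<longleftrightarrow> agrees_on A z y"
  shows "marginal_entropy S p B = marginal_entropy S p A"
proof -
  have marginal_\<sigma>: "marginal S p B (\<sigma> y) = marginal S p A y" if "y \<in> S" for y
  proof -
    have "marginal S p B (\<sigma> y) = (\<Sum>z\<in>S. if agrees_on B (\<sigma> z) (\<sigma> y) then p (\<sigma> z) else 0)"
      unfolding marginal_eq_sum_if[OF finite_S] by (rule sum.reindex_bij_betw[OF bij, symmetric])
    also have "\<dots> = marginal S p A y"
      unfolding marginal_eq_sum_if[OF finite_S] using that by (intro sum.cong) (auto simp: agrees_\<sigma> p_\<sigma>)
    finally show ?thesis .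
  qed
  have "marginal_entropy S p B = - (\<Sum>y\<in>S. p (\<sigma> y) * ln (marginal S p B (\<sigma> y)))"
    unfolding marginal_entropy_def by (subst sum.reindex_bij_betw[OF bij]) simp
  also have "\<dots> = marginal_entropy S p A"
    unfolding marginal_entropy_def by (simp add: marginal_\<sigma> p_\<sigma> cong: sum.cong)
  finally show ?thesis .
qed

context
  fixes S :: "('i \<Rightarrow> 'v) set" and p :: "('i \<Rightarrow> 'v) \<Rightarrow> real"
  assumes finite_S: "finite S" and p_pos: "\<And>y. y \<in> S \<Longrightarrow> 0 < p y"
begin

lemma marginal_pos: "y \<in> S \<Longrightarrow> 0 < marginal S p A y"
  unfolding marginal_def using finite_S p_pos
  by (intro sum_pos2[of _ y]) (auto simp: agrees_on_def less_imp_le)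

lemma sum_div_marginals_le:
  assumes t: "t \<in> S"
  shows "(\<Sum>y\<in>{y\<in>S. agrees_on A t y \<and> agrees_on B u y}.
            p y / (marginal S p (A \<union> B) y * marginal S p (A \<inter> B) y))
         \<le> (if agrees_on (A \<inter> B) u t then 1 / marginal S p (A \<inter> B) t else 0)"
proof (cases "{y\<in>S. agrees_on A t y \<and> agrees_on B u y} = {}")
  case True
  show ?thesis unfolding True using marginal_pos[OF t] by (simp add: less_imp_le)
next
  case False
  then obtain y0 where y0: "y0 \<in> S" "agrees_on A t y0" "agrees_on B u y0" by auto
  let ?PU = "marginal S p (A \<union> B)" and ?PI = "marginal S p (A \<inter> B)"
  have cell: "{y\<in>S. agrees_on A t y \<and> agrees_on B u y} = {y\<in>S. agrees_on (A \<union> B) y y0}"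
    using y0 by (auto simp: agrees_on_Un agrees_on_sym intro: agrees_on_trans)
  have "?PU y = ?PU y0 \<and> ?PI y = ?PI t" if "agrees_on (A \<union> B) y y0" for y
    using that y0 by (auto intro!: marginal_cong simp: agrees_on_def)
  then have "(\<Sum>y\<in>{y\<in>S. agrees_on A t y \<and> agrees_on B u y}. p y / (?PU y * ?PI y))
      = (\<Sum>y\<in>{y\<in>S. agrees_on (A \<union> B) y y0}. p y / (?PU y0 * ?PI t))"
    unfolding cell by (intro sum.cong refl) auto
  also have "\<dots> = 1 / ?PI t"
    using marginal_pos[OF y0(1), of "A \<union> B"] by (simp add: marginal_def sum_divide_distrib[symmetric])
  finally show ?thesis
    using y0 by (auto simp: agrees_on_def)
qed

text \<open>An \<open>A\<close>-class and a \<open>B\<close>-class of agreement meet in at most one \<open>(A \<union> B)\<close>-class, and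
  only if they lie in the same \<open>(A \<inter> B)\<close>-class.\<close>

lemma sum_marginal_ratio_le:
  "(\<Sum>y\<in>S. p y / (marginal S p (A \<union> B) y * marginal S p (A \<inter> B) y)
       * (marginal S p A y * marginal S p B y)) \<le> sum p S"
proof -
  let ?PA = "marginal S p A" and ?PB = "marginal S p B"
    and ?PU = "marginal S p (A \<union> B)" and ?PI = "marginal S p (A \<inter> B)"
  let ?w = "\<lambda>t u y. if agrees_on A t y \<and> agrees_on B u y then p t * p u else 0"
  have prod_marginals: "?PA y * ?PB y = (\<Sum>t\<in>S. \<Sum>u\<in>S. ?w t u y)" for y
    unfolding marginal_eq_sum_if[OF finite_S] sum_product by (intro sum.cong refl) auto
  have cell_sum: "(\<Sum>y\<in>S. p y / (?PU y * ?PI y) * ?w t u y)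
      = p t * p u * (\<Sum>y\<in>{y\<in>S. agrees_on A t y \<and> agrees_on B u y}. p y / (?PU y * ?PI y))"
    for t u
    unfolding sum.inter_filter[OF finite_S] sum_distrib_left by (intro sum.cong refl) simp
  have "(\<Sum>y\<in>S. p y / (?PU y * ?PI y) * (?PA y * ?PB y))
      = (\<Sum>t\<in>S. \<Sum>u\<in>S. \<Sum>y\<in>S. p y / (?PU y * ?PI y) * ?w t u y)"
    unfolding prod_marginals sum_distrib_left
    by (subst sum.swap) (rule sum.cong[OF refl], rule sum.swap)
  also have "\<dots> \<le> (\<Sum>t\<in>S. \<Sum>u\<in>S. p t * p u *
      (if agrees_on (A \<inter> B) u t then 1 / ?PI t else 0))"
    unfolding cell_sum using p_pos
    by (intro sum_mono mult_left_mono sum_div_marginals_le) (auto intro: less_imp_le)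
  also have "\<dots> = (\<Sum>t\<in>S. p t / ?PI t * (\<Sum>u\<in>S. if agrees_on (A \<inter> B) u t then p u else 0))"
    unfolding sum_distrib_left by (intro sum.cong refl) simp
  also have "\<dots> = sum p S"
  proof (rule sum.cong[OF refl])
    fix t assume "t \<in> S"
    then show "p t / ?PI t * (\<Sum>u\<in>S. if agrees_on (A \<inter> B) u t then p u else 0) = p t"
      using marginal_pos[of t "A \<inter> B"] by (simp add: marginal_eq_sum_if[OF finite_S, symmetric])
  qed
  finally show ?thesis .
qed

lemma marginal_entropy_submodular:
  "marginal_entropy S p (A \<union> B) + marginal_entropy S p (A \<inter> B)
     \<le> marginal_entropy S p A + marginal_entropy S p B"
proof -
  let ?PA = "marginal S p A" and ?PB = "marginal S p B"
    and ?PU = "marginal S p (A \<union> B)" and ?PI = "marginal S p (A \<inter> B)"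
  have "p y - p y / (?PU y * ?PI y) * (?PA y * ?PB y)
      \<le> p y * (ln (?PU y) + ln (?PI y) - ln (?PA y) - ln (?PB y))" if y: "y \<in> S" for y
  proof -
    have pos: "0 < ?PA y" "0 < ?PB y" "0 < ?PU y" "0 < ?PI y"
      using marginal_pos[OF y] by auto
    then have "ln (?PA y * ?PB y / (?PU y * ?PI y)) \<le> ?PA y * ?PB y / (?PU y * ?PI y) - 1"
      by (intro ln_le_minus_one) simp
    then have "1 - ?PA y * ?PB y / (?PU y * ?PI y) \<le> ln (?PU y) + ln (?PI y) - ln (?PA y) - ln (?PB y)"
      using pos by (simp add: ln_mult ln_div)
    then have "p y * (1 - ?PA y * ?PB y / (?PU y * ?PI y))
        \<le> p y * (ln (?PU y) + ln (?PI y) - ln (?PA y) - ln (?PB y))"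
      using p_pos[OF y] by (intro mult_left_mono) auto
    then show ?thesis
      by (simp add: right_diff_distrib)
  qed
  then have "sum p S - (\<Sum>y\<in>S. p y / (?PU y * ?PI y) * (?PA y * ?PB y))
      \<le> (\<Sum>y\<in>S. p y * (ln (?PU y) + ln (?PI y) - ln (?PA y) - ln (?PB y)))"
    unfolding sum_subtractf[symmetric] by (rule sum_mono)
  moreover have "(\<Sum>y\<in>S. p y * (ln (?PU y) + ln (?PI y) - ln (?PA y) - ln (?PB y)))
      = marginal_entropy S p A + marginal_entropy S p B
        - marginal_entropy S p (A \<union> B) - marginal_entropy S p (A \<inter> B)"
    unfolding marginal_entropy_def by (simp add: algebra_simps sum_subtractf sum.distrib)
  ultimately show ?thesis
    using sum_marginal_ratio_le[of A B] by linarith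
qed

lemma han_inequality:
  assumes "finite V" and "sum p S = 1"
  shows "(\<Sum>a\<in>V. marginal_entropy S p V - marginal_entropy S p (V - {a})) \<le> marginal_entropy S p V"
proof -
  have "(\<Sum>a\<in>B. marginal_entropy S p V - marginal_entropy S p (V - {a})) \<le> marginal_entropy S p B"
    if "B \<subseteq> V" for B
    using finite_subset[OF that \<open>finite V\<close>] that
  proof (induction B rule: finite_induct)
    case empty
    then show ?case
      using \<open>sum p S = 1\<close> by (simp add: marginal_entropy_def marginal_empty)
  next
    case (insert b B)
    have "(V - {b}) \<union> insert b B = V" "(V - {b}) \<inter> insert b B = B"
      using insert by auto
    then have "marginal_entropy S p V + marginal_entropy S p B
        \<le> marginal_entropy S p (V - {b}) + marginal_entropy S p (insert b B)"
      using marginal_entropy_submodular[of "V - {b}" "insert b B"] by simp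
    then show ?case
      using insert by simp
  qed
  then show ?thesis by blast
qed

end

lemma entropy_uniform_mixture_le:
  fixes p :: "'c \<Rightarrow> 'y \<Rightarrow> real"
  assumes "finite Y" "finite C" "C \<noteq> {}"
    and p_pos: "\<And>c y. c \<in> C \<Longrightarrow> y \<in> Y \<Longrightarrow> 0 < p c y"
    and p_sum: "\<And>c. c \<in> C \<Longrightarrow> sum (p c) Y = 1"
  defines "q y \<equiv> (\<Sum>c\<in>C. p c y) / card C"
  shows "- (\<Sum>y\<in>Y. q y * ln (q y)) \<le> ln (card C) - (\<Sum>c\<in>C. \<Sum>y\<in>Y. p c y * ln (p c y)) / card C"
proof -
  define N where "N = real (card C)"
  have "0 < N"
    using assms(2,3) by (simp add: N_def card_gt_0_iff)
  have "- ln (q y) \<le> ln N - ln (p c y)" if "c \<in> C" "y \<in> Y" for c y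
  proof -
    have "p c y / N \<le> q y"
      unfolding q_def N_def using assms(2) p_pos that
      by (intro divide_right_mono member_le_sum) (auto intro: less_imp_le)
    moreover have "0 < p c y / N"
      using p_pos[OF that] \<open>0 < N\<close> by simp
    ultimately have "ln (p c y / N) \<le> ln (q y)"
      by (subst ln_le_cancel_iff) auto
    then show ?thesis
      using p_pos[OF that] \<open>0 < N\<close> by (simp add: ln_div)
  qed
  then have "(\<Sum>y\<in>Y. q y * - ln (q y)) \<le> (\<Sum>y\<in>Y. \<Sum>c\<in>C. p c y / N * (ln N - ln (p c y)))"
    unfolding q_def N_def[symmetric] sum_divide_distrib sum_distrib_right using p_pos \<open>0 < N\<close>
    by (intro sum_mono mult_left_mono) (auto intro: less_imp_le)
  also have "\<dots> = (\<Sum>c\<in>C. (ln N * sum (p c) Y - (\<Sum>y\<in>Y. p c y * ln (p c y))) / N)"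
    by (subst sum.swap) (simp add: sum_divide_distrib sum_distrib_left right_diff_distrib
        sum_subtractf diff_divide_distrib mult.commute)
  also have "\<dots> = ln N - (\<Sum>c\<in>C. \<Sum>y\<in>Y. p c y * ln (p c y)) / N"
    using \<open>0 < N\<close> p_sum by (simp add: N_def sum_subtractf diff_divide_distrib sum_divide_distrib[symmetric])
  finally show ?thesis
    by (simp add: N_def sum_negf)
qed

section \<open>Binary entropy\<close>

lemma binary_entropy_ln_ge_linear:
  fixes t :: real
  assumes "0 < t" "t \<le> 1/2"
  shows "2 * ln 2 * t \<le> - t * ln t - (1 - t) * ln (1 - t)"
proof (cases "t \<le> 1/4")
  case True
  have "ln t \<le> - (2 * ln 2)"
    using assms True ln_le_cancel_iff[of t "1/4"] ln_mult[of 2 2] by (simp add: ln_div)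
  then have "2 * ln 2 * t \<le> - t * ln t"
    using mult_left_mono[of "ln t" "- (2 * ln 2)" t] assms by (simp add: algebra_simps)
  moreover have "(1 - t) * ln (1 - t) \<le> 0"
    using assms by (intro mult_nonneg_nonpos) auto
  ultimately show ?thesis by linarith
next
  case False
  define f where "f s = - s * ln s - (1 - s) * ln (1 - s) - 2 * ln 2 * s" for s :: real
  have "f (1/2) \<le> f t"
  proof (rule DERIV_nonpos_imp_nonincreasing[OF \<open>t \<le> 1/2\<close>])
    fix s assume s: "t \<le> s" "s \<le> 1/2"
    then have "0 < s" "s < 1" using False by auto
    then have "DERIV f s :> ln (1 - s) - ln s - 2 * ln 2"
      unfolding f_def by (auto intro!: derivative_eq_intros)
    moreover have "ln (1 - s) - ln s - 2 * ln 2 \<le> 0"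
    proof -
      have "ln (1 - s) \<le> ln (4 * s)"
        using s False by simp
      then show ?thesis
        using \<open>0 < s\<close> ln_mult[of 2 2] by (simp add: ln_mult)
    qed
    ultimately show "\<exists>y. DERIV f s :> y \<and> y \<le> 0" by blast
  qed
  moreover have "f (1/2) = 0"
    unfolding f_def by (simp add: ln_div)
  ultimately show ?thesis
    unfolding f_def by linarith
qed

lemma binary_mixture_entropy_ge_min:
  fixes u v :: real
  assumes "0 < u" "0 < v"
  shows "2 * ln 2 * min u v \<le> u * (ln (u + v) - ln u) + v * (ln (u + v) - ln v)"
proof -
  have *: "2 * ln 2 * u \<le> u * (ln (u + v) - ln u) + v * (ln (u + v) - ln v)"
    if "0 < u" "0 < v" "u \<le> v" for u v :: real
  proof -
    define w where "w = u + v"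
    define t where "t = u / w"
    have "0 < w" using that by (simp add: w_def)
    have t: "0 < t" "t \<le> 1/2"
      using that by (auto simp: t_def w_def field_simps)
    have uv: "u = w * t" "v = w * (1 - t)"
      using \<open>0 < w\<close> by (auto simp: t_def w_def field_simps)
    have "u * (ln w - ln u) + v * (ln w - ln v) = w * (- t * ln t - (1 - t) * ln (1 - t))"
      using t \<open>0 < w\<close> by (subst (1 2) uv(1), subst (1 2) uv(2)) (simp add: ln_mult, simp add: algebra_simps)
    moreover have "2 * ln 2 * u = w * (2 * ln 2 * t)"
      using uv(1) by simp
    moreover have "w * (2 * ln 2 * t) \<le> w * (- t * ln t - (1 - t) * ln (1 - t))"
      using binary_entropy_ln_ge_linear[OF t] \<open>0 < w\<close> by (intro mult_left_mono) auto
    ultimately show ?thesis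
      unfolding w_def by linarith
  qed
  show ?thesis
    using *[of u v] *[of v u] assms by (cases "u \<le> v") (auto simp: min_def add.commute)
qed

section \<open>Reed--Muller codes\<close>

definition low_supports :: "nat \<Rightarrow> nat \<Rightarrow> nat set set" where
  "low_supports m r = {S. S \<subseteq> {..<m} \<and> card S \<le> r}"

text \<open>The evaluation vector of the multilinear polynomial \<open>\<Sum>S\<in>F. \<Prod>i\<in>S. X\<^sub>i\<close> over \<open>\<bbbF>\<^sub>2\<close>.
  As \<open>X\<^sub>i\<^sup>k = X\<^sub>i\<close> on \<open>\<bbbF>\<^sub>2\<close>, these vectors with \<open>F \<subseteq> low_supports m r\<close> form \<open>RM m r\<close>.\<close>

definition multilinear_eval :: "nat \<Rightarrow> nat set set \<Rightarrow> nat set \<Rightarrow> bool" where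
  "multilinear_eval m F x \<longleftrightarrow> x \<in> pts m \<and> odd (card {S\<in>F. S \<subseteq> x})"

lemma finite_low_supports: "finite (low_supports m r)"
  by (rule finite_subset[of _ "Pow {..<m}"]) (auto simp: low_supports_def)

lemma card_low_supports_le: "card (low_supports m r) \<le> binom_le m r"
proof -
  have "low_supports m r = (\<Union>j\<le>r. {S. S \<subseteq> {..<m} \<and> card S = j})"
    unfolding low_supports_def by auto
  then have "card (low_supports m r) \<le> (\<Sum>j\<le>r. card {S. S \<subseteq> {..<m} \<and> card S = j})"
    using card_UN_le[of "{..r}"] by simp
  also have "\<dots> = binom_le m r"
    by (simp add: n_subsets binom_le_def)
  finally show ?thesis .
qed

lemma finite_mono_exps: "finite (mono_exps m r)"
proof -
  have "e \<in> (\<lambda>f i. if i < m then f i else 0) ` ({..<m} \<rightarrow>\<^sub>E {..r})" if e: "e \<in> mono_exps m r" for e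
  proof
    show "e = (\<lambda>i. if i < m then restrict e {..<m} i else 0)"
      using e by (auto simp: mono_exps_def fun_eq_iff)
    have "e i \<le> r" if "i < m" for i
      using e that member_le_sum[of i "{..<m}" e] by (auto simp: mono_exps_def)
    then show "restrict e {..<m} \<in> {..<m} \<rightarrow>\<^sub>E {..r}"
      by auto
  qed
  then have "mono_exps m r \<subseteq> (\<lambda>f i. if i < m then f i else 0) ` ({..<m} \<rightarrow>\<^sub>E {..r})"
    by blast
  then show ?thesis
    by (rule finite_subset) (auto intro: finite_PiE)
qed

lemma support_mono_exp:
  assumes "e \<in> mono_exps m r"
  shows "{i. 0 < e i} \<in> low_supports m r"
proof -
  have sub: "{i. 0 < e i} \<subseteq> {..<m}"
    using assms by (auto simp: mono_exps_def not_less[symmetric])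
  have "card {i. 0 < e i} \<le> (\<Sum>i\<in>{i. 0 < e i}. e i)"
    using card_eq_sum[of "{i. 0 < e i}"] sum_mono[of "{i. 0 < e i}" "\<lambda>_. 1" e] by simp
  also have "\<dots> \<le> (\<Sum>i<m. e i)"
    by (intro sum_mono2 sub) auto
  also have "\<dots> \<le> r"
    using assms by (simp add: mono_exps_def)
  finally show ?thesis
    using sub by (simp add: low_supports_def)
qed

lemma mono_eval_iff_support: "mono_eval e x \<longleftrightarrow> {i. 0 < e i} \<subseteq> x"
  unfolding mono_eval_def by auto

lemma poly_evalvec_eq_multilinear:
  "\<exists>F \<subseteq> low_supports m r. poly_evalvec m r a = multilinear_eval m F"
proof -
  define E where "E = {e\<in>mono_exps m r. a e}"
  define k where "k S = card {e\<in>E. {i. 0 < e i} = S}" for S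
  have E_sub: "E \<subseteq> mono_exps m r" and "finite E"
    unfolding E_def using finite_mono_exps by auto
  have "poly_evalvec m r a x \<longleftrightarrow> multilinear_eval m {S\<in>low_supports m r. odd (k S)} x" for x
  proof -
    let ?D = "{S\<in>low_supports m r. S \<subseteq> x}"
    have "card {e\<in>E. {i. 0 < e i} \<subseteq> x}
        = (\<Sum>S\<in>?D. card {e\<in>{e\<in>E. {i. 0 < e i} \<subseteq> x}. {i. 0 < e i} = S})"
      unfolding card_eq_sum
      by (rule sum.group[symmetric]) (use \<open>finite E\<close> E_sub finite_low_supports support_mono_exp in auto)
    also have "\<dots> = (\<Sum>S\<in>?D. k S)"
      unfolding k_def by (intro sum.cong refl arg_cong[where f = card]) auto
    finally have "card {e\<in>E. {i. 0 < e i} \<subseteq> x} = (\<Sum>S\<in>?D. k S)" .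
    then have "odd (card {e\<in>E. {i. 0 < e i} \<subseteq> x}) \<longleftrightarrow> odd (card {S\<in>?D. odd (k S)})"
      using even_sum_iff[of ?D k] finite_low_supports by simp
    moreover have "{e \<in> mono_exps m r. a e \<and> mono_eval e x} = {e\<in>E. {i. 0 < e i} \<subseteq> x}"
      unfolding E_def mono_eval_iff_support by auto
    ultimately show ?thesis
      unfolding poly_evalvec_def multilinear_eval_def by (simp add: conj_ac)
  qed
  then show ?thesis
    by (intro exI[of _ "{S\<in>low_supports m r. odd (k S)}"]) auto
qed

lemma multilinear_eval_in_RM:
  assumes F: "F \<subseteq> low_supports m r"
  shows "multilinear_eval m F \<in> RM m r"
proof -
  define a where "a e \<longleftrightarrow> (\<exists>S\<in>F. e = indicator S)" for e :: "nat \<Rightarrow> nat"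
  have inj: "inj (indicator :: nat set \<Rightarrow> nat \<Rightarrow> nat)"
    by (rule injI) (simp add: fun_eq_iff indicator_def set_eq_iff of_bool_eq_iff)
  have support: "0 < (indicator S i :: nat) \<longleftrightarrow> i \<in> S" for S i
    by (simp add: indicator_def)
  have "indicator S \<in> mono_exps m r" if "S \<in> low_supports m r" for S
  proof -
    have S: "S \<subseteq> {..<m}" "card S \<le> r"
      using that by (auto simp: low_supports_def)
    then have "(\<Sum>i<m. indicator S i) = card S"
      using sum_indicator_eq_card[of "{..<m}" S] by (simp add: Int_absorb1)
    with S show ?thesis
      by (auto simp: mono_exps_def indicator_eq_0_iff)
  qed
  with F have terms: "{e \<in> mono_exps m r. a e \<and> mono_eval e x} = indicator ` {S\<in>F. S \<subseteq> x}" for x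
    unfolding a_def mono_eval_iff_support by (auto simp: support)
  have "poly_evalvec m r a = multilinear_eval m F"
  proof (rule ext)
    fix x
    have "card {e \<in> mono_exps m r. a e \<and> mono_eval e x} = card {S\<in>F. S \<subseteq> x}"
      unfolding terms by (rule card_image[OF inj_on_subset[OF inj subset_UNIV]])
    then show "poly_evalvec m r a x = multilinear_eval m F x"
      by (simp add: poly_evalvec_def multilinear_eval_def)
  qed
  then show ?thesis
    unfolding RM_def by (metis rangeI)
qed

lemma RM_eq_multilinear_image: "RM m r = multilinear_eval m ` Pow (low_supports m r)"
proof (intro equalityI subsetI)
  fix c assume "c \<in> RM m r"
  then obtain a where "c = poly_evalvec m r a"
    by (auto simp: RM_def)
  with poly_evalvec_eq_multilinear[of m r a] show "c \<in> multilinear_eval m ` Pow (low_supports m r)"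
    by blast
qed (auto intro: multilinear_eval_in_RM)

lemma card_RM_le: "card (RM m r) \<le> 2 ^ binom_le m r"
proof -
  have "card (RM m r) \<le> card (Pow (low_supports m r))"
    unfolding RM_eq_multilinear_image by (rule card_image_le) (simp add: finite_low_supports)
  also have "\<dots> \<le> 2 ^ binom_le m r"
    by (simp add: card_Pow finite_low_supports card_low_supports_le)
  finally show ?thesis .
qed

text \<open>On supports, \<open>sym_diff x a\<close> is the sum \<open>x + a\<close> in \<open>\<bbbF>\<^sub>2\<^sup>m\<close>. The sets \<open>T\<close> with
  \<open>S - a \<subseteq> T \<subseteq> S\<close> index the monomials in the expansion of \<open>\<Prod>i\<in>S. (X\<^sub>i + a\<^sub>i)\<close>.\<close>

lemma odd_card_translated_monomial:
  assumes "finite S"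
  shows "odd (card {T. S - a \<subseteq> T \<and> T \<subseteq> S \<and> T \<subseteq> x}) \<longleftrightarrow> S \<subseteq> sym_diff x a"
proof (cases "S - a \<subseteq> x")
  case False
  then have "card {T. S - a \<subseteq> T \<and> T \<subseteq> S \<and> T \<subseteq> x} = 0" and "\<not> S \<subseteq> sym_diff x a"
    by (auto simp: card_eq_0_iff)
  then show ?thesis
    by (metis even_zero)
next
  case True
  have "{T. S - a \<subseteq> T \<and> T \<subseteq> S \<and> T \<subseteq> x} = (\<union>) (S - a) ` Pow (S \<inter> a \<inter> x)"
  proof (intro equalityI subsetI)
    fix T assume "T \<in> {T. S - a \<subseteq> T \<and> T \<subseteq> S \<and> T \<subseteq> x}"
    then have "T = (S - a) \<union> (T \<inter> a)" "T \<inter> a \<in> Pow (S \<inter> a \<inter> x)"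
      by auto
    then show "T \<in> (\<union>) (S - a) ` Pow (S \<inter> a \<inter> x)"
      by blast
  qed (use True in auto)
  moreover have "inj_on ((\<union>) (S - a)) (Pow (S \<inter> a \<inter> x))"
    by (auto simp: inj_on_def)
  ultimately have "card {T. S - a \<subseteq> T \<and> T \<subseteq> S \<and> T \<subseteq> x} = 2 ^ card (S \<inter> a \<inter> x)"
    using assms by (simp add: card_image card_Pow del: Pow_Int_eq)
  then show ?thesis
    using True assms by auto
qed

lemma multilinear_eval_translate:
  assumes F: "F \<subseteq> low_supports m r" and a: "a \<in> pts m"
  shows "multilinear_eval m F (sym_diff x a)
    \<longleftrightarrow> multilinear_eval m {T\<in>low_supports m r. odd (card {S\<in>F. S - a \<subseteq> T \<and> T \<subseteq> S})} x"
proof (cases "x \<in> pts m")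
  case False
  then show ?thesis
    using a by (auto simp: multilinear_eval_def pts_def)
next
  case True
  define cnt where "cnt T = card {S\<in>F. S - a \<subseteq> T \<and> T \<subseteq> S}" for T
  let ?D = "{T\<in>low_supports m r. T \<subseteq> x}"
  have "finite F" "finite ?D"
    using finite_subset[OF F finite_low_supports] finite_low_supports by auto
  have finite_F: "finite S" if "S \<in> F" for S
    using F that by (auto simp: low_supports_def intro: finite_subset)
  have "S \<subseteq> sym_diff x a \<longleftrightarrow> odd (card {T\<in>?D. S - a \<subseteq> T \<and> T \<subseteq> S})" if S: "S \<in> F" for S
  proof -
    have "T \<in> low_supports m r" if "T \<subseteq> S" for T
      using S F that card_mono[OF finite_F[OF S] that] by (auto simp: low_supports_def)
    then have terms: "{T. S - a \<subseteq> T \<and> T \<subseteq> S \<and> T \<subseteq> x} = {T\<in>?D. S - a \<subseteq> T \<and> T \<subseteq> S}"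
      by auto
    show ?thesis
      using odd_card_translated_monomial[OF finite_F[OF S], of a x, unfolded terms] by simp
  qed
  then have "{S\<in>F. S \<subseteq> sym_diff x a} = {S\<in>F. odd (card {T\<in>?D. S - a \<subseteq> T \<and> T \<subseteq> S})}"
    by auto
  then have "odd (card {S\<in>F. S \<subseteq> sym_diff x a})
      \<longleftrightarrow> odd (\<Sum>S\<in>F. card {T\<in>?D. S - a \<subseteq> T \<and> T \<subseteq> S})"
    using even_sum_iff[OF \<open>finite F\<close>, of "\<lambda>S. card {T\<in>?D. S - a \<subseteq> T \<and> T \<subseteq> S}"] by simp
  also have "(\<Sum>S\<in>F. card {T\<in>?D. S - a \<subseteq> T \<and> T \<subseteq> S}) = (\<Sum>T\<in>?D. cnt T)"
    unfolding cnt_def card_eq_sum sum.inter_filter[OF \<open>finite F\<close>] sum.inter_filter[OF \<open>finite ?D\<close>]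
    by (rule sum.swap)
  also have "odd \<dots> \<longleftrightarrow> odd (card {T\<in>{T\<in>low_supports m r. odd (cnt T)}. T \<subseteq> x})"
    using even_sum_iff[OF \<open>finite ?D\<close>, of cnt] by (simp add: conj_ac)
  finally show ?thesis
    using True a by (auto simp: multilinear_eval_def pts_def cnt_def)
qed

definition translate :: "nat set \<Rightarrow> (nat set \<Rightarrow> bool) \<Rightarrow> nat set \<Rightarrow> bool" where
  "translate a y = (\<lambda>x. y (sym_diff x a))"

lemma sym_diff_cancel: "sym_diff (sym_diff x a) a = x"
  by auto

lemma translate_translate: "translate a (translate a y) = y"
  by (simp add: translate_def sym_diff_cancel)

lemma RM_translate:
  assumes "c \<in> RM m r" and "a \<in> pts m"
  shows "translate a c \<in> RM m r"
proof -
  obtain F where F: "F \<subseteq> low_supports m r" "c = multilinear_eval m F"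
    using assms(1) unfolding RM_eq_multilinear_image by blast
  let ?F' = "{T\<in>low_supports m r. odd (card {S\<in>F. S - a \<subseteq> T \<and> T \<subseteq> S})}"
  have "translate a c = multilinear_eval m ?F'"
    using F multilinear_eval_translate[OF F(1) assms(2)] by (auto simp: translate_def)
  then show ?thesis
    by (simp add: multilinear_eval_in_RM)
qed

section \<open>The binary symmetric channel\<close>

lemma finite_pts: "finite (pts m)"
  by (simp add: pts_def)

lemma card_pts: "card (pts m) = 2 ^ m"
  by (simp add: pts_def card_Pow)

lemma empty_in_pts: "{} \<in> pts m"
  by (simp add: pts_def)

lemma sym_diff_in_pts_iff: "a \<in> pts m \<Longrightarrow> sym_diff x a \<in> pts m \<longleftrightarrow> x \<in> pts m"
  by (auto simp: pts_def)

lemma words_eq_image_Pow: "words m = (\<lambda>B x. x \<in> B) ` Pow (pts m)"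
proof (intro equalityI subsetI)
  fix Z assume "Z \<in> words m"
  then have "Z = (\<lambda>x. x \<in> {x. Z x})" "{x. Z x} \<in> Pow (pts m)"
    by (auto simp: words_def)
  then show "Z \<in> (\<lambda>B x. x \<in> B) ` Pow (pts m)"
    by blast
qed (auto simp: words_def)

lemma finite_words: "finite (words m)"
  by (simp add: words_eq_image_Pow finite_pts)

lemma RM_subset_words: "RM m r \<subseteq> words m"
  by (auto simp: RM_def words_def poly_evalvec_def)

lemma finite_RM: "finite (RM m r)"
  using finite_subset[OF RM_subset_words finite_words] .

lemma RM_nonempty: "RM m r \<noteq> {}"
  by (simp add: RM_def)

lemma card_RM_pos: "0 < card (RM m r)"
  using finite_RM RM_nonempty by (simp add: card_gt_0_iff)

lemma sum_words_prod:
  fixes f :: "nat set \<Rightarrow> bool \<Rightarrow> real"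
  shows "(\<Sum>Z\<in>words m. \<Prod>x\<in>pts m. f x (Z x)) = (\<Prod>x\<in>pts m. f x True + f x False)"
proof -
  have "inj_on (\<lambda>B x. x \<in> B) (Pow (pts m))"
    by (auto simp: inj_on_def fun_eq_iff)
  then have "(\<Sum>Z\<in>words m. \<Prod>x\<in>pts m. f x (Z x)) = (\<Sum>B\<in>Pow (pts m). \<Prod>x\<in>pts m. f x (x \<in> B))"
    unfolding words_eq_image_Pow by (simp add: sum.reindex)
  also have "\<dots> = (\<Sum>B\<in>Pow (pts m). (\<Prod>x\<in>B. f x True) * (\<Prod>x\<in>pts m - B. f x False))"
  proof (rule sum.cong[OF refl])
    fix B assume "B \<in> Pow (pts m)"
    then have "(\<Prod>x\<in>pts m. f x (x \<in> B)) = (\<Prod>x\<in>pts m - B. f x (x \<in> B)) * (\<Prod>x\<in>B. f x (x \<in> B))"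
      using finite_pts by (intro prod.subset_diff) auto
    moreover have "(\<Prod>x\<in>pts m - B. f x (x \<in> B)) = (\<Prod>x\<in>pts m - B. f x False)"
      by (rule prod.cong) auto
    ultimately show "(\<Prod>x\<in>pts m. f x (x \<in> B)) = (\<Prod>x\<in>B. f x True) * (\<Prod>x\<in>pts m - B. f x False)"
      by simp
  qed
  also have "\<dots> = (\<Prod>x\<in>pts m. f x True + f x False)"
    by (rule prod_add[OF finite_pts, symmetric])
  finally show ?thesis .
qed

lemma noise_prob_pos: "0 < eps \<Longrightarrow> eps < 1 \<Longrightarrow> 0 < noise_prob m eps Z"
  unfolding noise_prob_def by (rule prod_pos) auto

lemma sum_noise_prob_mult:
  assumes "x0 \<in> pts m"
  shows "(\<Sum>Z\<in>words m. noise_prob m eps Z * g (Z x0)) = eps * g True + (1 - eps) * g False"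
proof -
  define f where "f x b = (if b then eps else 1 - eps) * (if x = x0 then g b else 1)" for x b
  have "noise_prob m eps Z * g (Z x0) = (\<Prod>x\<in>pts m. f x (Z x))" for Z
    using assms finite_pts by (simp add: f_def noise_prob_def prod.distrib prod.delta)
  then have "(\<Sum>Z\<in>words m. noise_prob m eps Z * g (Z x0)) = (\<Prod>x\<in>pts m. f x True + f x False)"
    by (simp add: sum_words_prod)
  also have "\<dots> = (\<Prod>x\<in>pts m. if x = x0 then eps * g True + (1 - eps) * g False else 1)"
    by (rule prod.cong) (auto simp: f_def)
  also have "\<dots> = eps * g True + (1 - eps) * g False"
    using assms finite_pts by (simp add: prod.delta)
  finally show ?thesis .
qed

lemma sum_noise_prob: "(\<Sum>Z\<in>words m. noise_prob m eps Z) = 1"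
  using sum_noise_prob_mult[OF empty_in_pts, where g = "\<lambda>_. 1"] by simp

lemma sum_noise_prob_ln:
  assumes "0 < eps" "eps < 1"
  shows "(\<Sum>Z\<in>words m. noise_prob m eps Z * ln (noise_prob m eps Z)) = - (2 ^ m * ln 2 * bin_entropy eps)"
proof -
  let ?lg = "\<lambda>b. ln (if b then eps else 1 - eps)"
  have "(\<Sum>Z\<in>words m. noise_prob m eps Z * ln (noise_prob m eps Z))
      = (\<Sum>Z\<in>words m. \<Sum>x\<in>pts m. noise_prob m eps Z * ?lg (Z x))"
    using assms finite_pts by (simp add: noise_prob_def ln_prod sum_distrib_left if_distrib)
  also have "\<dots> = (\<Sum>x\<in>pts m. eps * ln eps + (1 - eps) * ln (1 - eps))"
    by (subst sum.swap) (simp add: sum_noise_prob_mult[where g = ?lg])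
  also have "\<dots> = - (2 ^ m * ln 2 * bin_entropy eps)"
    using ln_gt_zero[of "2::real"] by (simp add: card_pts bin_entropy_def log_def field_simps)
  finally show ?thesis .
qed

lemma bij_betw_xor_words: "c \<in> words m \<Longrightarrow> bij_betw (\<lambda>y x. c x \<noteq> y x) (words m) (words m)"
  by (rule bij_betw_byWitness[where f' = "\<lambda>y x. c x \<noteq> y x"]) (auto simp: words_def)

lemma sum_words_xor: "c \<in> words m \<Longrightarrow> (\<Sum>y\<in>words m. h (\<lambda>x. c x \<noteq> y x)) = sum h (words m)"
  using sum.reindex_bij_betw[OF bij_betw_xor_words] .

lemma sum_noise_prob_xor: "c \<in> words m \<Longrightarrow> (\<Sum>y\<in>words m. noise_prob m eps (\<lambda>x. c x \<noteq> y x)) = 1"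
  by (simp only: sum_words_xor sum_noise_prob)

definition received_prob :: "nat \<Rightarrow> nat \<Rightarrow> real \<Rightarrow> (nat set \<Rightarrow> bool) \<Rightarrow> real" where
  "received_prob m r eps y = (\<Sum>c\<in>RM m r. noise_prob m eps (\<lambda>x. c x \<noteq> y x)) / card (RM m r)"

lemma received_prob_pos: "0 < eps \<Longrightarrow> eps < 1 \<Longrightarrow> 0 < received_prob m r eps y"
  unfolding received_prob_def using card_RM_pos finite_RM RM_nonempty noise_prob_pos
  by (intro divide_pos_pos sum_pos) auto

lemma sum_received_prob: "(\<Sum>y\<in>words m. received_prob m r eps y) = 1"
proof -
  have "(\<Sum>y\<in>words m. received_prob m r eps y)
      = (\<Sum>c\<in>RM m r. \<Sum>y\<in>words m. noise_prob m eps (\<lambda>x. c x \<noteq> y x)) / card (RM m r)"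
    unfolding received_prob_def sum_divide_distrib[symmetric] by (rule arg_cong2[where f = "(/)"], rule sum.swap, rule refl)
  also have "\<dots> = (\<Sum>c\<in>RM m r. 1) / card (RM m r)"
    by (intro arg_cong2[where f = "(/)"] sum.cong refl sum_noise_prob_xor) (use RM_subset_words in blast)
  also have "\<dots> = 1"
    using card_RM_pos by simp
  finally show ?thesis .
qed

lemma marginal_pts:
  "y \<in> words m \<Longrightarrow> marginal (words m) p (pts m) y = p y"
proof -
  assume "y \<in> words m"
  then have "{z \<in> words m. agrees_on (pts m) z y} = {y}"
    by (auto simp: words_def agrees_on_def fun_eq_iff)
  then show ?thesis
    by (simp add: marginal_def)
qed

lemma marginal_entropy_received_le:
  assumes "0 < eps" "eps < 1"
  shows "marginal_entropy (words m) (received_prob m r eps) (pts m)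
           \<le> binom_le m r * ln 2 + 2 ^ m * ln 2 * bin_entropy eps"
proof -
  let ?p = "\<lambda>c y. noise_prob m eps (\<lambda>x. c x \<noteq> y x)"
  have "marginal_entropy (words m) (received_prob m r eps) (pts m)
      = - (\<Sum>y\<in>words m. received_prob m r eps y * ln (received_prob m r eps y))"
    by (simp add: marginal_entropy_def marginal_pts)
  also have "\<dots> \<le> ln (card (RM m r)) - (\<Sum>c\<in>RM m r. \<Sum>y\<in>words m. ?p c y * ln (?p c y)) / card (RM m r)"
    unfolding received_prob_def
  proof (rule entropy_uniform_mixture_le)
    show "sum (?p c) (words m) = 1" if "c \<in> RM m r" for c
      using that RM_subset_words by (blast intro: sum_noise_prob_xor)
  qed (use assms finite_words finite_RM RM_nonempty noise_prob_pos in auto)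
  also have "\<dots> = ln (card (RM m r)) + 2 ^ m * ln 2 * bin_entropy eps"
  proof -
    have "(\<Sum>y\<in>words m. ?p c y * ln (?p c y)) = - (2 ^ m * ln 2 * bin_entropy eps)" if "c \<in> RM m r" for c
      using sum_words_xor[of c m "\<lambda>Z. noise_prob m eps Z * ln (noise_prob m eps Z)"]
        sum_noise_prob_ln[OF assms, of m] that RM_subset_words by auto
    then show ?thesis
      using card_RM_pos by simp
  qed
  also have "ln (card (RM m r)) \<le> ln (2 ^ binom_le m r)"
    using card_RM_le card_RM_pos by (simp del: of_nat_power add: of_nat_power[symmetric])
  finally show ?thesis
    by (simp add: ln_realpow)
qed

lemma translate_in_words: "a \<in> pts m \<Longrightarrow> y \<in> words m \<Longrightarrow> translate a y \<in> words m"
  unfolding translate_def words_def using sym_diff_in_pts_iff by blast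

lemma bij_betw_translate_words: "a \<in> pts m \<Longrightarrow> bij_betw (translate a) (words m) (words m)"
  by (rule bij_betw_byWitness[where f' = "translate a"]) (auto simp: translate_translate translate_in_words)

lemma bij_betw_translate_RM: "a \<in> pts m \<Longrightarrow> bij_betw (translate a) (RM m r) (RM m r)"
  by (rule bij_betw_byWitness[where f' = "translate a"])
     (auto simp: translate_translate RM_translate)

lemma bij_betw_sym_diff_pts: "a \<in> pts m \<Longrightarrow> bij_betw (\<lambda>x. sym_diff x a) (pts m) (pts m)"
  by (rule bij_betw_byWitness[where f' = "\<lambda>x. sym_diff x a"]) (auto simp: sym_diff_in_pts_iff)

lemma noise_prob_translate:
  assumes "a \<in> pts m"
  shows "noise_prob m eps (\<lambda>x. c x \<noteq> translate a y x) = noise_prob m eps (\<lambda>x. translate a c x \<noteq> y x)"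
proof -
  let ?g = "\<lambda>x. if c x \<noteq> y (sym_diff x a) then eps else 1 - eps"
  have "noise_prob m eps (\<lambda>x. c x \<noteq> translate a y x) = prod (\<lambda>x. ?g (sym_diff x a)) (pts m)"
    by (subst prod.reindex_bij_betw[OF bij_betw_sym_diff_pts[OF assms]])
       (simp add: noise_prob_def translate_def)
  also have "\<dots> = noise_prob m eps (\<lambda>x. translate a c x \<noteq> y x)"
    by (simp add: noise_prob_def translate_def sym_diff_cancel)
  finally show ?thesis .
qed

lemma received_prob_translate:
  assumes "a \<in> pts m"
  shows "received_prob m r eps (translate a y) = received_prob m r eps y"
proof -
  have "(\<Sum>c\<in>RM m r. noise_prob m eps (\<lambda>x. c x \<noteq> translate a y x))
      = (\<Sum>c\<in>RM m r. noise_prob m eps (\<lambda>x. translate a c x \<noteq> y x))"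
    using noise_prob_translate[OF assms] by simp
  also have "\<dots> = (\<Sum>c\<in>RM m r. noise_prob m eps (\<lambda>x. c x \<noteq> y x))"
    by (rule sum.reindex_bij_betw[OF bij_betw_translate_RM[OF assms]])
  finally show ?thesis
    by (simp add: received_prob_def)
qed

lemma marginal_entropy_received_translate:
  assumes a: "a \<in> pts m"
  shows "marginal_entropy (words m) (received_prob m r eps) (pts m - {a})
       = marginal_entropy (words m) (received_prob m r eps) (pts m - {{}})"
proof (rule marginal_entropy_bij_invariant[OF finite_words bij_betw_translate_words[OF a]])
  show "received_prob m r eps (translate a y) = received_prob m r eps y" for y
    by (rule received_prob_translate[OF a])
  show "agrees_on (pts m - {a}) (translate a z) (translate a y) \<longleftrightarrow> agrees_on (pts m - {{}}) z y" for y z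
  proof -
    have "sym_diff x a \<in> pts m - {{}} \<longleftrightarrow> x \<in> pts m - {a}" for x
      using sym_diff_in_pts_iff[OF a] by auto
    then show ?thesis
      unfolding agrees_on_def translate_def by (metis sym_diff_cancel)
  qed
qed

section \<open>Bit-MAP decoding\<close>

definition punctured_likelihood :: "nat \<Rightarrow> real \<Rightarrow> (nat set \<Rightarrow> bool) \<Rightarrow> (nat set \<Rightarrow> bool) \<Rightarrow> real" where
  "punctured_likelihood m eps c y = (\<Prod>x\<in>pts m - {{}}. if c x = y x then 1 - eps else eps)"

lemma lik_eq_sum_punctured:
  "lik m r eps y b = (\<Sum>c\<in>{c\<in>RM m r. c {} = b}. punctured_likelihood m eps c y)"
  by (simp add: lik_def punctured_likelihood_def)

lemma punctured_likelihood_upd: "punctured_likelihood m eps c (y({} := b)) = punctured_likelihood m eps c y"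
  unfolding punctured_likelihood_def by (rule prod.cong) auto

lemma lik_upd: "lik m r eps (y({} := b)) b' = lik m r eps y b'"
  by (simp add: lik_eq_sum_punctured punctured_likelihood_upd)

lemma noise_prob_xor_eq:
  "noise_prob m eps (\<lambda>x. c x \<noteq> y x)
     = (if c {} = y {} then 1 - eps else eps) * punctured_likelihood m eps c y"
proof -
  have "noise_prob m eps (\<lambda>x. c x \<noteq> y x) = (\<Prod>x\<in>pts m. if c x = y x then 1 - eps else eps)"
    unfolding noise_prob_def by (rule prod.cong) auto
  then show ?thesis
    unfolding punctured_likelihood_def by (simp add: prod.remove[OF finite_pts empty_in_pts])
qed

lemma sum_split_bool_value:
  assumes "finite C"
  shows "(\<Sum>c\<in>C. g (v c) c) = (\<Sum>c\<in>{c\<in>C. v c = False}. g False c) + (\<Sum>c\<in>{c\<in>C. v c = True}. g True c)"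
proof -
  have "(\<Sum>c\<in>C. g (v c) c) = (\<Sum>c\<in>C. (if v c = False then g False c else 0) + (if v c = True then g True c else 0))"
    by (rule sum.cong) auto
  then show ?thesis
    by (simp only: sum.distrib sum.inter_filter[OF assms])
qed

lemma sum_RM_xor_eq_lik:
  "(\<Sum>c\<in>RM m r. noise_prob m eps (\<lambda>x. c x \<noteq> y x) * g (c {}))
     = (\<Sum>b\<in>UNIV. (if b = y {} then 1 - eps else eps) * lik m r eps y b * g b)"
  unfolding noise_prob_xor_eq
  by (subst sum_split_bool_value[OF finite_RM, where v = "\<lambda>c. c {}"])
     (simp add: UNIV_bool lik_eq_sum_punctured sum_distrib_left sum_distrib_right mult_ac)

lemma min_le_convex_comb:
  fixes a b e :: real
  assumes "0 \<le> e" "e \<le> 1"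
  shows "min a b \<le> (1 - e) * a + e * b"
proof -
  have "(1 - e) * min a b \<le> (1 - e) * a" "e * min a b \<le> e * b"
    using assms by (simp_all add: mult_left_mono)
  then show ?thesis
    by (simp add: algebra_simps)
qed

lemma received_prob_ge_min_lik:
  assumes "0 \<le> eps" "eps \<le> 1"
  shows "min (lik m r eps y False) (lik m r eps y True) / card (RM m r) \<le> received_prob m r eps y"
proof -
  have "received_prob m r eps y * card (RM m r)
      = (1 - eps) * lik m r eps y (y {}) + eps * lik m r eps y (\<not> y {})"
    using sum_RM_xor_eq_lik[where g = "\<lambda>_. 1"] card_RM_pos
    by (cases "y {}") (simp_all add: received_prob_def UNIV_bool)
  moreover have "min (lik m r eps y False) (lik m r eps y True)
      \<le> (1 - eps) * lik m r eps y (y {}) + eps * lik m r eps y (\<not> y {})"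
    using assms min_le_convex_comb[of eps "lik m r eps y (y {})" "lik m r eps y (\<not> y {})"]
    by (cases "y {}") (simp_all add: min.commute)
  ultimately show ?thesis
    using card_RM_pos by (simp add: pos_divide_le_eq)
qed

definition map_error :: "nat \<Rightarrow> nat \<Rightarrow> real \<Rightarrow> bool \<Rightarrow> (nat set \<Rightarrow> bool) \<Rightarrow> real" where
  "map_error m r eps b y =
     (if lik m r eps y (\<not> b) > lik m r eps y b then 1
      else if lik m r eps y (\<not> b) = lik m r eps y b then 1/2 else 0)"

lemma dec_err_eq_map_error: "dec_err m r eps c (\<lambda>x. c x \<noteq> y x) = map_error m r eps (c {}) y"
proof -
  have "(\<lambda>x. c x \<noteq> (c x \<noteq> y x)) = y"
    by auto
  then show ?thesis
    by (simp add: dec_err_def map_error_def Let_def)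
qed

lemma map_error_upd: "map_error m r eps b (y({} := b')) = map_error m r eps b y"
  by (simp add: map_error_def lik_upd)

lemma lik_mult_map_error:
  "lik m r eps y False * map_error m r eps False y + lik m r eps y True * map_error m r eps True y
     = min (lik m r eps y False) (lik m r eps y True)"
  by (auto simp: map_error_def min_def)

lemma sum_words_flip_origin: "(\<Sum>y\<in>words m. g (y({} := \<not> y {}))) = sum g (words m)"
proof (rule sum.reindex_bij_betw)
  show "bij_betw (\<lambda>y. y({} := \<not> y {})) (words m) (words m)"
    by (rule bij_betw_byWitness[where f' = "\<lambda>y. y({} := \<not> y {})"])
       (use empty_in_pts[of m] in \<open>auto simp: words_def fun_eq_iff split: if_splits\<close>)
qed

lemma P_e_eq_sum_min:
  "P_e m r eps = (\<Sum>y\<in>words m. min (lik m r eps y False) (lik m r eps y True)) / (2 * card (RM m r))"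
proof -
  define L where "L y s = (\<Sum>b\<in>UNIV. (if b = s then 1 - eps else eps) * lik m r eps y b * map_error m r eps b y)"
    for y s
  have received: "(\<Sum>Z\<in>words m. noise_prob m eps Z * dec_err m r eps c Z)
      = (\<Sum>y\<in>words m. noise_prob m eps (\<lambda>x. c x \<noteq> y x) * map_error m r eps (c {}) y)" if "c \<in> RM m r" for c
    using sum_words_xor[of c m "\<lambda>Z. noise_prob m eps Z * dec_err m r eps c Z"] that RM_subset_words
    by (simp only: dec_err_eq_map_error subset_iff)
  have "P_e m r eps = (\<Sum>c\<in>RM m r. \<Sum>Z\<in>words m. noise_prob m eps Z * dec_err m r eps c Z) / card (RM m r)"
    by (simp add: P_e_def sum_divide_distrib)
  also have "\<dots> = (\<Sum>c\<in>RM m r. \<Sum>y\<in>words m. noise_prob m eps (\<lambda>x. c x \<noteq> y x) * map_error m r eps (c {}) y)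
      / card (RM m r)"
    by (simp only: received cong: sum.cong)
  also have "\<dots> = (\<Sum>y\<in>words m. L y (y {})) / card (RM m r)"
    unfolding L_def
    by (subst sum.swap) (rule arg_cong2[where f = "(/)"] sum.cong refl sum_RM_xor_eq_lik)+
  also have "\<dots> = (\<Sum>y\<in>words m. L y (y {}) + L y (\<not> y {})) / (2 * card (RM m r))"
  proof -
    have "L (y({} := b)) s = L y s" for y b s
      by (simp add: L_def lik_upd map_error_upd)
    then have "(\<Sum>y\<in>words m. L y (\<not> y {})) = (\<Sum>y\<in>words m. L y (y {}))"
      using sum_words_flip_origin[of "\<lambda>y. L y (y {})" m] by simp
    then show ?thesis
      by (simp add: sum.distrib)
  qed
  also have "\<dots> = (\<Sum>y\<in>words m. min (lik m r eps y False) (lik m r eps y True)) / (2 * card (RM m r))"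
  proof -
    have "L y s + L y (\<not> s) = min (lik m r eps y False) (lik m r eps y True)" for y s
      unfolding lik_mult_map_error[symmetric] L_def by (cases s) (simp_all add: UNIV_bool algebra_simps)
    then show ?thesis
      by simp
  qed
  finally show ?thesis .
qed

lemma marginal_punctured:
  assumes y: "y \<in> words m"
  shows "marginal (words m) p (pts m - {{}}) y = p y + p (y({} := \<not> y {}))"
proof -
  have "{z \<in> words m. agrees_on (pts m - {{}}) z y} = {y, y({} := \<not> y {})}"
  proof (intro equalityI subsetI)
    fix z assume z: "z \<in> {z \<in> words m. agrees_on (pts m - {{}}) z y}"
    then have "z x = y x" if "x \<noteq> {}" for x
      using y that by (cases "x \<in> pts m") (auto simp: words_def agrees_on_def)
    then have upd: "z = y({} := z {})"
      by (auto simp: fun_eq_iff)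
    show "z \<in> {y, y({} := \<not> y {})}"
    proof (cases "z {} = y {}")
      case True
      then show ?thesis
        using upd by (simp only: fun_upd_triv insert_iff simp_thms)
    next
      case False
      then have "z {} = (\<not> y {})"
        by blast
      then show ?thesis
        using upd by (simp only: insert_iff simp_thms)
    qed
  next
    fix z assume "z \<in> {y, y({} := \<not> y {})}"
    then show "z \<in> {z \<in> words m. agrees_on (pts m - {{}}) z y}"
      using y empty_in_pts[of m] by (auto simp: words_def agrees_on_def split: if_splits)
  qed
  moreover have "y({} := \<not> y {}) \<noteq> y"
    by (auto simp: fun_eq_iff)
  ultimately show ?thesis
    by (simp add: marginal_def)
qed

lemma P_e_le_entropy_gap:
  assumes "0 < eps" "eps < 1"
  shows "2 * ln 2 * P_e m r eps
    \<le> marginal_entropy (words m) (received_prob m r eps) (pts m)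
       - marginal_entropy (words m) (received_prob m r eps) (pts m - {{}})"
proof -
  let ?q = "received_prob m r eps"
  let ?min = "\<lambda>y. min (lik m r eps y False) (lik m r eps y True)"
  define G where "G y = ?q y * (ln (?q y + ?q (y({} := \<not> y {}))) - ln (?q y))" for y
  have q_pos: "0 < ?q y" for y
    using received_prob_pos[OF assms] .
  have "marginal_entropy (words m) ?q (pts m) - marginal_entropy (words m) ?q (pts m - {{}})
      = (\<Sum>y\<in>words m. G y)"
    unfolding marginal_entropy_def G_def
    by (simp add: marginal_pts marginal_punctured sum_subtractf[symmetric] algebra_simps)
  also have "\<dots> = (\<Sum>y\<in>words m. G y + G (y({} := \<not> y {}))) / 2"
    using sum_words_flip_origin[of G m] by (simp add: sum.distrib)
  also have "\<dots> \<ge> (\<Sum>y\<in>words m. 2 * ln 2 * (?min y / card (RM m r))) / 2"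
  proof (intro divide_right_mono sum_mono)
    fix y
    have "?min y / card (RM m r) \<le> min (?q y) (?q (y({} := \<not> y {})))"
      using received_prob_ge_min_lik[of eps m r y] received_prob_ge_min_lik[of eps m r "y({} := \<not> y {})"] assms
      by (simp add: lik_upd)
    then have "2 * ln 2 * (?min y / card (RM m r)) \<le> 2 * ln 2 * min (?q y) (?q (y({} := \<not> y {})))"
      by (intro mult_left_mono) auto
    also have "\<dots> \<le> G y + G (y({} := \<not> y {}))"
      using binary_mixture_entropy_ge_min[OF q_pos q_pos, of y "y({} := \<not> y {})"]
      by (simp add: G_def add.commute)
    finally show "2 * ln 2 * (?min y / card (RM m r)) \<le> G y + G (y({} := \<not> y {}))" .
  qed simp
  also have "(\<Sum>y\<in>words m. 2 * ln 2 * (?min y / card (RM m r))) / 2 = 2 * ln 2 * P_e m r eps"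
    by (simp add: P_e_eq_sum_min sum_distrib_left sum_divide_distrib)
  finally show ?thesis .
qed

lemma P_e_le:
  assumes "0 < eps" "eps < 1"
  shows "P_e m r eps \<le> (binom_le m r / 2 ^ m + bin_entropy eps) / 2"
proof -
  let ?H = "marginal_entropy (words m) (received_prob m r eps)"
  have "2 ^ m * (2 * ln 2 * P_e m r eps) \<le> 2 ^ m * (?H (pts m) - ?H (pts m - {{}}))"
    using P_e_le_entropy_gap[OF assms] by (intro mult_left_mono) auto
  also have "\<dots> = (\<Sum>a\<in>pts m. ?H (pts m) - ?H (pts m - {a}))"
    by (simp add: marginal_entropy_received_translate card_pts)
  also have "\<dots> \<le> ?H (pts m)"
    using finite_words received_prob_pos[OF assms] finite_pts sum_received_prob
    by (intro han_inequality) auto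
  also have "\<dots> \<le> binom_le m r * ln 2 + 2 ^ m * ln 2 * bin_entropy eps"
    by (rule marginal_entropy_received_le[OF assms])
  finally have "ln 2 * (2 ^ m * (2 * P_e m r eps)) \<le> ln 2 * (binom_le m r + 2 ^ m * bin_entropy eps)"
    by (simp add: algebra_simps)
  then have "2 ^ m * (2 * P_e m r eps) \<le> binom_le m r + 2 ^ m * bin_entropy eps"
    by simp
  then show ?thesis
    by (simp add: field_simps)
qed

theorem corollary1:
  fixes eps :: real and m r :: "nat \<Rightarrow> nat"
  assumes "0 < eps" and "eps < 1/2"
    and "\<And>i. 0 < m i" and "\<And>i. 0 < r i" and "\<And>i. r i \<le> m i"
    and "filterlim m at_top sequentially"
    and "limsup (\<lambda>i. ereal (real (binom_le (m i) (r i)) / 2 ^ m i)) < ereal (1 - bin_entropy eps)"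
  shows "\<exists>c>0. eventually (\<lambda>i. P_e (m i) (r i) eps < 1/2 - c) sequentially"
proof -
  let ?rate = "\<lambda>i. real (binom_le (m i) (r i)) / 2 ^ m i"
  have "eps < 1"
    using assms(2) by simp
  obtain d where d: "limsup (\<lambda>i. ereal (?rate i)) < ereal d" "d < 1 - bin_entropy eps"
    using ereal_dense2[OF assms(7)] by auto
  have "eventually (\<lambda>i. ?rate i < d) sequentially"
    using Limsup_lessD[OF d(1)] by simp
  then have "eventually (\<lambda>i. P_e (m i) (r i) eps < 1/2 - (1 - bin_entropy eps - d) / 2) sequentially"
  proof (rule eventually_mono)
    fix i assume "?rate i < d"
    have "P_e (m i) (r i) eps \<le> (?rate i + bin_entropy eps) / 2"
      by (rule P_e_le[OF assms(1) \<open>eps < 1\<close>])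
    also have "\<dots> < (d + bin_entropy eps) / 2"
      using \<open>?rate i < d\<close> by (intro divide_strict_right_mono add_strict_right_mono) auto
    also have "\<dots> = 1/2 - (1 - bin_entropy eps - d) / 2"
      by (simp add: field_simps)
    finally show "P_e (m i) (r i) eps < 1/2 - (1 - bin_entropy eps - d) / 2" .
  qed
  then show ?thesis
    using d(2) by (intro exI[of _ "(1 - bin_entropy eps - d) / 2"]) simp
qed

end
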